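(* Let $\eta,\lambda\in\mathbb{C}$, let $k\ge1$, and let $\tau_1,\dots,\tau_k$ be positive integers. Then in $\mathcal{F}_{\eta,\lambda}$, $$L_{-\tau_1}L_{-\tau_2}\cdots L_{-\tau_k}|\eta\rangle=(\tau_k)(\tau_k+\tau_{k-1})\cdots(\tau_k+\tau_{k-1}+\cdots+\tau_2)\,\big[\eta+(\tau_k-1)\lambda\big]\,\alpha_{-(\tau_1+\cdots+\tau_k)}|\eta\rangle+R,$$ where $R$ is a linear combination of monomials $\alpha_{-\sigma_1}\cdots\alpha_{-\sigma_j}|\eta\rangle$ with $j\ge2$. (For $k=1$ the product of partial sums is empty and equals $1$.) Consequently, if $\Delta h$ is a negative integer and $U=\sum_{|\tau|=-\Delta h}A_\tau L_{-\tau_1}\cdots L_{-\tau_{\ell(\tau)}}$ with $\tau_1\ge\cdots\ge\tau_{\ell(\tau)}$, then the coefficient of $\alpha_{\Delta h}|\eta\rangle$ in the monomial basis expansion of $U|\eta\rangle$ is $$-\frac{1}{\Delta h}\sum_{|\tau|=-\Delta h}[\tau]!\,\big[\eta+(\tau_{\ell(\tau)}-1)\lambda\big]A_\tau.$$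
   Context: The Heisenberg modes satisfy $[\alpha_m,\alpha_n]=m\delta_{m,-n}$. $\mathcal{F}_{\eta,\lambda}$ is the Fock space generated by $|\eta\rangle$, with $\alpha_n|\eta\rangle=0$ for $n>0$ and $\alpha_0|\eta\rangle=\eta|\eta\rangle$. It has basis the monomials $\alpha_{-\sigma_1}\cdots\alpha_{-\sigma_j}|\eta\rangle$ ($\sigma$ a partition) and carries the Virasoro action $$L_n=\tfrac12\sum_k:\alpha_k\alpha_{n-k}:-\lambda(n+1)\alpha_n,$$ where normal ordering places positive-index modes to the right. For a partition $\tau=(\tau_1\ge\cdots\ge\tau_\ell>0)$, define $[\tau]!=(\tau_1+\cdots+\tau_\ell)(\tau_2+\cdots+\tau_\ell)\cdots(\tau_\ell)$. *)

theory Defs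
  imports Complex_Main "HOL-Library.Multiset"
begin

text \<open>Vectors of the Fock space F_{eta,lambda}: coefficient functions on the monomial basis.
  The basis monomial alpha_{-s1}...alpha_{-sj}|eta> (s a partition) is indexed by the
  multiset of its parts.  Heisenberg modes with distinct negative indices commute,
  so the order of the factors is irrelevant.\<close>
type_synonym fvec = "nat multiset \<Rightarrow> complex"

text \<open>Heisenberg mode alpha_n acting on F_{eta,lambda}
  ([alpha_m, alpha_n] = m delta_{m,-n}, alpha_n|eta> = 0 for n>0, alpha_0 = eta).\<close>
definition alpha :: "complex \<Rightarrow> int \<Rightarrow> fvec \<Rightarrow> fvec" where
  "alpha \<eta> n v = (\<lambda>m.
     if n < 0 then (if nat (- n) \<in># m then v (m - {#nat (- n)#}) else 0)
     else if n = 0 then \<eta> * v m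
     else of_int n * of_nat (count m (nat n) + 1) * v (m + {#nat n#}))"

definition nord :: "complex \<Rightarrow> int \<Rightarrow> int \<Rightarrow> fvec \<Rightarrow> fvec" where
  "nord \<eta> j l v =
     (if 0 < j \<and> l \<le> 0 then alpha \<eta> l (alpha \<eta> j v) else alpha \<eta> j (alpha \<eta> l v))"

text \<open>For each basis index m only finitely many k give a nonzero contribution, so the
  infinite sum is the (finite) sum over the nonzero terms.\<close>
definition vir :: "complex \<Rightarrow> complex \<Rightarrow> int \<Rightarrow> fvec \<Rightarrow> fvec" where
  "vir \<eta> lam n v = (\<lambda>m.
     (1/2) * (\<Sum>k\<in>{k::int. nord \<eta> k (n - k) v m \<noteq> 0}. nord \<eta> k (n - k) v m)
     - lam * of_int (n + 1) * alpha \<eta> n v m)"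

definition vac :: fvec where
  "vac = (\<lambda>m. if m = {#} then 1 else 0)"

definition Lmon :: "complex \<Rightarrow> complex \<Rightarrow> nat list \<Rightarrow> fvec \<Rightarrow> fvec" where
  "Lmon \<eta> lam ts v = foldr (\<lambda>t w. vir \<eta> lam (- int t) w) ts v"

definition partitions_of :: "nat \<Rightarrow> nat list set" where
  "partitions_of N = {ts. sorted_wrt (\<ge>) ts \<and> (\<forall>t\<in>set ts. 0 < t) \<and> sum_list ts = N}"

definition bfact :: "nat list \<Rightarrow> nat" where
  "bfact ts = (\<Prod>i<length ts. \<Sum>j\<in>{i..<length ts}. ts ! j)"

end

theory Submission
  imports Defs
begin

text \<open>On components with at most one mode, L_{-s} (s > 0) acts triangularly: it kills the
  |\<eta>\<rangle> component, sends |\<eta>\<rangle> to (\<eta> + (s - 1)\<lambda>) \<alpha>_{-s}|\<eta>\<rangle>, and sends \<alpha>_{-N}|\<eta>\<rangle> to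
  N \<alpha>_{-(N+s)}|\<eta>\<rangle> plus terms with two modes (the mode sum contains :\<alpha>_{-(N+s)}\<alpha>_N: twice,
  compensating the factor 1/2).  Applying L_{-\<tau>_k}, ..., L_{-\<tau>_1} to |\<eta>\<rangle> in turn therefore
  multiplies the single-mode coefficient by the successive suffix sums of \<tau>.  Since [\<tau>]! is
  |\<tau>| times the product of these sums, the coefficient formula follows on dividing by
  -\<Delta>h = |\<tau>|.\<close>

lemma sum_nonzero_terms:
  assumes "finite S" and "\<And>k. k \<notin> S \<Longrightarrow> f k = 0"
  shows "(\<Sum>k\<in>{k. f k \<noteq> 0}. f k) = sum f S"
  using assms by (intro sum.mono_neutral_left) auto

lemma alpha_neg_singleton:
  assumes "s > 0"
  shows "alpha \<eta> (- int s) w {#M#} = (if M = s then w {#} else 0)"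
  using assms unfolding alpha_def by auto

lemma nord_neg_empty:
  assumes "s > 0"
  shows "nord \<eta> k (- int s - k) w {#} = 0"
  using assms unfolding nord_def alpha_def by auto

lemma nord_neg_singleton:
  assumes "s > 0"
  shows "nord \<eta> k (- int s - k) w {#M#} =
     (if k \<in> {0, - int s} \<and> M = s then \<eta> * w {#} else 0)
   + (if k \<in> {int M - int s, - int M} \<and> M > s then of_nat (M - s) * w {#M - s#} else 0)"
  using assms unfolding nord_def alpha_def
  by (auto intro!: arg_cong[where f=w])

lemma vir_neg_empty:
  assumes "s > 0"
  shows "vir \<eta> lam (- int s) w {#} = 0"
  using assms unfolding vir_def by (simp add: nord_neg_empty alpha_def)

lemma vir_neg_singleton:
  assumes s: "s > 0"
  shows "vir \<eta> lam (- int s) w {#M#} =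
     (if M = s then (\<eta> + (of_nat s - 1) * lam) * w {#} else 0)
   + (if M > s then of_nat (M - s) * w {#M - s#} else 0)"
proof -
  define K1 K2 where "K1 = {0, - int s}" and "K2 = {int M - int s, - int M}"
  define g h where "g k = (if k \<in> K1 \<and> M = s then \<eta> * w {#} else 0)"
    and "h k = (if k \<in> K2 \<and> M > s then of_nat (M - s) * w {#M - s#} else 0)" for k
  have nord_eq: "nord \<eta> k (- int s - k) w {#M#} = g k + h k" for k
    unfolding g_def h_def K1_def K2_def by (rule nord_neg_singleton[OF s])
  have "(\<Sum>k\<in>{k. g k + h k \<noteq> 0}. g k + h k) = sum g (K1 \<union> K2) + sum h (K1 \<union> K2)"
    by (subst sum_nonzero_terms[where S = "K1 \<union> K2"])
       (auto simp: g_def h_def K1_def K2_def sum.distrib)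
  also have "\<dots> = sum g K1 + sum h K2"
    by (intro arg_cong2[where f = "(+)"] sum.mono_neutral_right)
       (auto simp: g_def h_def K1_def K2_def)
  also have "\<dots> = (if M = s then 2 * \<eta> * w {#} else 0)
      + (if M > s then 2 * of_nat (M - s) * w {#M - s#} else 0)"
    using s by (auto simp: g_def h_def K1_def K2_def)
  finally have nord_sum: "(\<Sum>k\<in>{k. g k + h k \<noteq> 0}. g k + h k) = \<dots>" .
  show ?thesis
    using s unfolding vir_def nord_eq nord_sum
    by (auto simp: alpha_neg_singleton field_simps)
qed

definition suffix_sum_prod :: "nat list \<Rightarrow> nat" where
  "suffix_sum_prod ts = (\<Prod>i\<in>{1..<length ts}. \<Sum>j\<in>{i..<length ts}. ts ! j)"

lemma suffix_sum_prod_Cons: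
  assumes "ts \<noteq> []"
  shows "suffix_sum_prod (t # ts) = sum_list ts * suffix_sum_prod ts"
proof -
  have "suffix_sum_prod (t # ts) = (\<Prod>i<length ts. \<Sum>j\<in>{i..<length ts}. ts ! j)"
    unfolding suffix_sum_prod_def
    by (simp add: prod.atLeast_Suc_lessThan_Suc_shift sum.atLeast_Suc_lessThan_Suc_shift
        atLeast0LessThan del: prod.op_ivl_Suc sum.op_ivl_Suc)
  also have "{..<length ts} = insert 0 {1..<length ts}"
    using assms by auto
  finally show ?thesis
    by (simp add: suffix_sum_prod_def sum_list_sum_nth)
qed

lemma bfact_eq_sum_list_mult:
  assumes "ts \<noteq> []"
  shows "bfact ts = sum_list ts * suffix_sum_prod ts"
proof -
  have "{..<length ts} = insert 0 {1..<length ts}"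
    using assms by auto
  then show ?thesis
    unfolding bfact_def suffix_sum_prod_def by (simp add: sum_list_sum_nth)
qed

lemma Lmon_Cons: "Lmon \<eta> lam (t # ts) v = vir \<eta> lam (- int t) (Lmon \<eta> lam ts v)"
  by (simp add: Lmon_def)

lemma Lmon_vac_empty:
  assumes "\<forall>t\<in>set ts. 0 < t"
  shows "Lmon \<eta> lam ts vac {#} = (if ts = [] then 1 else 0)"
  using assms by (cases ts) (simp_all add: Lmon_def vac_def vir_neg_empty)

lemma Lmon_vac_singleton:
  assumes "\<forall>t\<in>set ts. 0 < t"
  shows "Lmon \<eta> lam ts vac {#M#} =
    (if ts \<noteq> [] \<and> M = sum_list ts
     then of_nat (suffix_sum_prod ts) * (\<eta> + (of_nat (last ts) - 1) * lam) else 0)"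
  using assms
proof (induction ts arbitrary: M)
  case Nil
  then show ?case by (simp add: Lmon_def vac_def)
next
  case (Cons t ts)
  then have "t > 0" by simp
  show ?case
  proof (cases "ts = []")
    case True
    with \<open>t > 0\<close> show ?thesis
      by (simp add: Lmon_Cons vir_neg_singleton Lmon_vac_empty suffix_sum_prod_def Lmon_def vac_def)
  next
    case False
    with Cons.prems have "sum_list ts > 0" and "Lmon \<eta> lam ts vac {#} = 0"
      by (cases ts; simp add: Lmon_vac_empty)+
    with Cons False \<open>t > 0\<close> show ?thesis
      by (auto simp: Lmon_Cons vir_neg_singleton suffix_sum_prod_Cons)
  qed
qed

lemma Lmon_vac_top_coeff_bfact:
  assumes "ts \<noteq> []" and "\<forall>t\<in>set ts. 0 < t"
  shows "of_nat (sum_list ts) * Lmon \<eta> lam ts vac {#sum_list ts#}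
    = of_nat (bfact ts) * (\<eta> + (of_nat (last ts) - 1) * lam)"
  using assms by (simp add: Lmon_vac_singleton bfact_eq_sum_list_mult)

theorem mainTheorem4:
  fixes \<eta> lam :: complex
  shows
  "(\<forall>ts::nat list. ts \<noteq> [] \<and> (\<forall>t\<in>set ts. 0 < t) \<longrightarrow>
      Lmon \<eta> lam ts vac {#sum_list ts#}
        = of_nat (\<Prod>i\<in>{1..<length ts}. \<Sum>j\<in>{i..<length ts}. ts ! j)
          * (\<eta> + (of_nat (last ts) - 1) * lam)
    \<and> (\<forall>m. size m \<le> 1 \<and> m \<noteq> {#sum_list ts#} \<longrightarrow> Lmon \<eta> lam ts vac m = 0))
   \<and> (\<forall>(\<Delta>h::int) (A :: nat list \<Rightarrow> complex). \<Delta>h < 0 \<longrightarrow>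
      (\<Sum>ts\<in>partitions_of (nat (- \<Delta>h)). A ts * Lmon \<eta> lam ts vac {#nat (- \<Delta>h)#})
        = - (1 / of_int \<Delta>h) *
          (\<Sum>ts\<in>partitions_of (nat (- \<Delta>h)).
             of_nat (bfact ts) * (\<eta> + (of_nat (last ts) - 1) * lam) * A ts))"
proof (intro conjI allI impI)
  fix ts :: "nat list" and m :: "nat multiset"
  assume ts: "ts \<noteq> [] \<and> (\<forall>t\<in>set ts. 0 < t)"
  then show "Lmon \<eta> lam ts vac {#sum_list ts#} = of_nat (\<Prod>i\<in>{1..<length ts}. \<Sum>j\<in>{i..<length ts}. ts ! j)
      * (\<eta> + (of_nat (last ts) - 1) * lam)"
    by (simp add: Lmon_vac_singleton suffix_sum_prod_def)
  assume "size m \<le> 1 \<and> m \<noteq> {#sum_list ts#}"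
  then consider "m = {#}" | M where "m = {#M#}" "M \<noteq> sum_list ts"
    by (metis le_Suc_eq size_1_singleton_mset size_eq_0_iff_empty le_zero_eq One_nat_def)
  then show "Lmon \<eta> lam ts vac m = 0"
    by cases (use ts in \<open>simp_all add: Lmon_vac_empty Lmon_vac_singleton\<close>)
next
  fix \<Delta>h :: int and A :: "nat list \<Rightarrow> complex"
  assume "\<Delta>h < 0"
  have "A ts * Lmon \<eta> lam ts vac {#nat (- \<Delta>h)#}
      = - (1 / of_int \<Delta>h) * (of_nat (bfact ts) * (\<eta> + (of_nat (last ts) - 1) * lam) * A ts)"
    if "ts \<in> partitions_of (nat (- \<Delta>h))" for ts
  proof -
    from that \<open>\<Delta>h < 0\<close> have "sum_list ts = nat (- \<Delta>h)" "ts \<noteq> []" "\<forall>t\<in>set ts. 0 < t"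
      by (auto simp: partitions_of_def)
    with Lmon_vac_top_coeff_bfact[of ts \<eta> lam] \<open>\<Delta>h < 0\<close> show ?thesis
      by (simp add: field_simps)
  qed
  then show "(\<Sum>ts\<in>partitions_of (nat (- \<Delta>h)). A ts * Lmon \<eta> lam ts vac {#nat (- \<Delta>h)#})
      = - (1 / of_int \<Delta>h) * (\<Sum>ts\<in>partitions_of (nat (- \<Delta>h)).
          of_nat (bfact ts) * (\<eta> + (of_nat (last ts) - 1) * lam) * A ts)"
    by (simp add: sum_distrib_left)
qed

end
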